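(* For $n\geq 3$, the groups $H_n$ and $VP_n$ are not isomorphic.
   Context: The virtual braid group $VB_n$ is the group with generators $\sigma_i,\rho_i$ ($i=1,\dots,n-1$) and defining relations: $\sigma_i\sigma_{i+1}\sigma_i=\sigma_{i+1}\sigma_i\sigma_{i+1}$ ($1\le i\le n-2$); $\sigma_i\sigma_j=\sigma_j\sigma_i$ ($|i-j|\geq 2$); $\rho_i\rho_{i+1}\rho_i=\rho_{i+1}\rho_i\rho_{i+1}$ ($1\le i\le n-2$); $\rho_i\rho_j=\rho_j\rho_i$ ($|i-j|\geq 2$); $\rho_i^2=1$; $\sigma_i\rho_j=\rho_j\sigma_i$ ($|i-j|\geq2$); $\rho_i\rho_{i+1}\sigma_i=\sigma_{i+1}\rho_i\rho_{i+1}$ ($1\le i\le n-2$). $H_n$ is the kernel of $\mu:VB_n\to S_n$, $\mu(\sigma_i)=1$, $\mu(\rho_i)=(i\ i{+}1)$ (equivalently, the normal closure of $\langle\sigma_1,\dots,\sigma_{n-1}\rangle$). $VP_n$ is the kernel of $\nu:VB_n\to S_n$, $\nu(\sigma_i)=\nu(\rho_i)=(i\ i{+}1)$. *)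

theory Defs
  imports "HOL-Algebra.Group" "HOL-Algebra.Coset"
begin

text \<open>Generators of the virtual braid group: Sig i = sigma_i, Rho i = rho_i (1 \<le> i \<le> n-1).
 A letter is a pair (b, g); b = True means the inverse of g.\<close>

datatype gen = Sig nat | Rho nat

type_synonym letter = "bool \<times> gen"
type_synonym word = "letter list"

fun gidx :: "gen \<Rightarrow> nat" where
  "gidx (Sig i) = i" | "gidx (Rho i) = i"

definition letters :: "nat \<Rightarrow> letter set" where
  "letters n = {(b, g). 1 \<le> gidx g \<and> gidx g \<le> n - 1}"

definition linv :: "letter \<Rightarrow> letter" where
  "linv x = (\<not> fst x, snd x)"

abbreviation s :: "nat \<Rightarrow> letter" where "s i \<equiv> (False, Sig i)"
abbreviation r :: "nat \<Rightarrow> letter" where "r i \<equiv> (False, Rho i)"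

definition vb_relations :: "nat \<Rightarrow> (word \<times> word) set" where
  "vb_relations n =
     {([s i, s (i+1), s i], [s (i+1), s i, s (i+1)]) | i. 1 \<le> i \<and> i \<le> n - 2}
   \<union> {([s i, s j], [s j, s i]) | i j. 1 \<le> i \<and> i \<le> n - 1 \<and> 1 \<le> j \<and> j \<le> n - 1
          \<and> (i + 2 \<le> j \<or> j + 2 \<le> i)}
   \<union> {([r i, r (i+1), r i], [r (i+1), r i, r (i+1)]) | i. 1 \<le> i \<and> i \<le> n - 2}
   \<union> {([r i, r j], [r j, r i]) | i j. 1 \<le> i \<and> i \<le> n - 1 \<and> 1 \<le> j \<and> j \<le> n - 1
          \<and> (i + 2 \<le> j \<or> j + 2 \<le> i)}
   \<union> {([r i, r i], []) | i. 1 \<le> i \<and> i \<le> n - 1}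
   \<union> {([s i, r j], [r j, s i]) | i j. 1 \<le> i \<and> i \<le> n - 1 \<and> 1 \<le> j \<and> j \<le> n - 1
          \<and> (i + 2 \<le> j \<or> j + 2 \<le> i)}
   \<union> {([r i, r (i+1), s i], [s (i+1), r i, r (i+1)]) | i. 1 \<le> i \<and> i \<le> n - 2}"

inductive vb_eqv :: "nat \<Rightarrow> word \<Rightarrow> word \<Rightarrow> bool" for n where
  refl: "w \<in> lists (letters n) \<Longrightarrow> vb_eqv n w w"
| sym: "vb_eqv n u v \<Longrightarrow> vb_eqv n v u"
| trans: "vb_eqv n u v \<Longrightarrow> vb_eqv n v w \<Longrightarrow> vb_eqv n u w"
| cancel: "u \<in> lists (letters n) \<Longrightarrow> v \<in> lists (letters n) \<Longrightarrow> x \<in> letters n \<Longrightarrow>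
           vb_eqv n (u @ [x, linv x] @ v) (u @ v)"
| rel: "(lhs, rhs) \<in> vb_relations n \<Longrightarrow> u \<in> lists (letters n) \<Longrightarrow> v \<in> lists (letters n) \<Longrightarrow>
           vb_eqv n (u @ lhs @ v) (u @ rhs @ v)"

definition vb_rel :: "nat \<Rightarrow> (word \<times> word) set" where
  "vb_rel n = {(u, v). vb_eqv n u v}"

definition VB :: "nat \<Rightarrow> word set monoid" where
  "VB n = \<lparr> carrier = lists (letters n) // vb_rel n,
            mult = (\<lambda>X Y. vb_rel n `` {(SOME x. x \<in> X) @ (SOME y. y \<in> Y)}),
            one = vb_rel n `` {[]} \<rparr>"

definition adj :: "nat \<Rightarrow> nat \<Rightarrow> nat" where
  "adj i = (\<lambda>k. if k = i then Suc i else if k = Suc i then i else k)"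

text \<open>mu(sigma_i) = 1, mu(rho_i) = (i i+1); nu(sigma_i) = nu(rho_i) = (i i+1).
 Transpositions are involutions, so inverse letters map to the same permutation.\<close>
fun mu_letter :: "letter \<Rightarrow> nat \<Rightarrow> nat" where
  "mu_letter (b, Sig i) = id"
| "mu_letter (b, Rho i) = adj i"

fun nu_letter :: "letter \<Rightarrow> nat \<Rightarrow> nat" where
  "nu_letter (b, g) = adj (gidx g)"

definition mu_word :: "word \<Rightarrow> nat \<Rightarrow> nat" where
  "mu_word w = foldr (\<lambda>x f. mu_letter x \<circ> f) w id"

definition nu_word :: "word \<Rightarrow> nat \<Rightarrow> nat" where
  "nu_word w = foldr (\<lambda>x f. nu_letter x \<circ> f) w id"

definition H :: "nat \<Rightarrow> word set set" where
  "H n = {X \<in> carrier (VB n). \<forall>w \<in> X. mu_word w = id}"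

definition VP :: "nat \<Rightarrow> word set set" where
  "VP n = {X \<in> carrier (VB n). \<forall>w \<in> X. nu_word w = id}"

end

theory Submission
  imports Defs
begin

text \<open>Suppose \<open>\<phi> : H\<^sub>n \<cong> VP\<^sub>n\<close>. Composing \<open>\<phi>\<close> with the mod-2 crossing count of
  \<open>VP\<^sub>n\<close> gives a homomorphism \<open>\<Psi>\<close> from \<open>H\<^sub>n\<close> onto the image of that count, an
  elementary abelian 2-group. Since a word in the \<open>\<rho>\<^sub>j\<close> with trivial permutation is trivial
  (the Coxeter relations of \<open>S\<^sub>n\<close> hold among the \<open>\<rho>\<^sub>j\<close>), \<open>H\<^sub>n\<close> is generated by the
  conjugates \<open>p \<sigma>\<^sub>i\<^sup>\<plusminus>\<^sup>1 p\<^sup>-\<^sup>1\<close> with \<open>p\<close> a word in the \<open>\<rho>\<^sub>j\<close>. The braid relation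
  among the \<open>\<sigma>\<^sub>i\<close> and the mixed relation show that each such conjugate has the same
  \<open>\<Psi>\<close>-value as \<open>\<sigma>\<^sub>1\<close> or as \<open>\<rho>\<^sub>1\<sigma>\<^sub>1\<rho>\<^sub>1\<close>, so \<open>\<Psi>\<close> takes at most four values.
  But the crossing count takes five distinct values on \<open>VP\<^sub>n\<close> as soon as \<open>n \<ge> 3\<close>.\<close>

section \<open>The word congruence\<close>

lemma vb_eqv_lists: "vb_eqv n u v \<Longrightarrow> u \<in> lists (letters n) \<and> v \<in> lists (letters n)"
  by (induction rule: vb_eqv.induct) (auto simp: vb_relations_def letters_def linv_def)

lemma vb_eqv_append_left:
  "vb_eqv n u v \<Longrightarrow> w \<in> lists (letters n) \<Longrightarrow> vb_eqv n (w @ u) (w @ v)"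
proof (induction rule: vb_eqv.induct)
  case (refl w')
  then show ?case by (intro vb_eqv.refl) auto
next
  case (cancel u v x)
  then show ?case using vb_eqv.cancel[of "w @ u" n v x] by auto
next
  case (rel lhs rhs u v)
  then show ?case using vb_eqv.rel[of lhs rhs n "w @ u" v] by auto
qed (blast intro: vb_eqv.sym vb_eqv.trans)+

lemma vb_eqv_append_right:
  "vb_eqv n u v \<Longrightarrow> w \<in> lists (letters n) \<Longrightarrow> vb_eqv n (u @ w) (v @ w)"
proof (induction rule: vb_eqv.induct)
  case (refl w')
  then show ?case by (intro vb_eqv.refl) auto
next
  case (cancel u v x)
  then show ?case using vb_eqv.cancel[of u n "v @ w" x] by auto
next
  case (rel lhs rhs u v)
  then show ?case using vb_eqv.rel[of lhs rhs n u "v @ w"] by auto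
qed (blast intro: vb_eqv.sym vb_eqv.trans)+

lemma vb_eqv_append: "vb_eqv n u u' \<Longrightarrow> vb_eqv n v v' \<Longrightarrow> vb_eqv n (u @ v) (u' @ v')"
  by (meson vb_eqv_append_left vb_eqv_append_right vb_eqv_lists vb_eqv.trans)

lemma vb_eqv_context:
  "vb_eqv n a b \<Longrightarrow> u \<in> lists (letters n) \<Longrightarrow> v \<in> lists (letters n) \<Longrightarrow>
    vb_eqv n (u @ a @ v) (u @ b @ v)"
  by (rule vb_eqv_append[OF vb_eqv.refl vb_eqv_append[OF _ vb_eqv.refl]])

lemma vb_eqv_contextI:
  "vb_eqv n a b \<Longrightarrow> u \<in> lists (letters n) \<Longrightarrow> v \<in> lists (letters n) \<Longrightarrow>
    x = u @ a @ v \<Longrightarrow> y = u @ b @ v \<Longrightarrow> vb_eqv n x y"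
  using vb_eqv_context by blast

lemmas [trans] = vb_eqv.trans

lemma letters_iff [simp]: "(b, g) \<in> letters n \<longleftrightarrow> 1 \<le> gidx g \<and> gidx g \<le> n - 1"
  by (simp add: letters_def)

lemma linv_pair [simp]: "linv (b, g) = (\<not> b, g)"
  by (simp add: linv_def)

lemma linv_linv [simp]: "linv (linv x) = x"
  by (simp add: linv_def)

lemma linv_in_letters [simp]: "linv x \<in> letters n \<longleftrightarrow> x \<in> letters n"
  by (auto simp: linv_def letters_def)

lemma vb_relation_eqv: "(l, l') \<in> vb_relations n \<Longrightarrow> vb_eqv n l l'"
  using vb_eqv.rel[of l l' n "[]" "[]"] by simp

lemma cancel_eqv: "x \<in> letters n \<Longrightarrow> vb_eqv n [x, linv x] []"
  using vb_eqv.cancel[of "[]" n "[]" x] by simp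

lemma sigma_braid_eqv:
  "1 \<le> i \<Longrightarrow> i \<le> n - 2 \<Longrightarrow> vb_eqv n [s i, s (i+1), s i] [s (i+1), s i, s (i+1)]"
  by (rule vb_relation_eqv) (auto simp: vb_relations_def)

lemma rho_braid_eqv:
  "1 \<le> i \<Longrightarrow> i \<le> n - 2 \<Longrightarrow> vb_eqv n [r i, r (i+1), r i] [r (i+1), r i, r (i+1)]"
  by (rule vb_relation_eqv) (auto simp: vb_relations_def)

lemma rho_commute_eqv:
  "1 \<le> i \<Longrightarrow> i \<le> n - 1 \<Longrightarrow> 1 \<le> j \<Longrightarrow> j \<le> n - 1 \<Longrightarrow> i + 2 \<le> j \<or> j + 2 \<le> i \<Longrightarrow>
    vb_eqv n [r i, r j] [r j, r i]"
  by (rule vb_relation_eqv) (auto simp: vb_relations_def)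

lemma rho_square_eqv: "1 \<le> i \<Longrightarrow> i \<le> n - 1 \<Longrightarrow> vb_eqv n [r i, r i] []"
  by (rule vb_relation_eqv) (auto simp: vb_relations_def)

lemma sigma_rho_commute_eqv:
  "1 \<le> i \<Longrightarrow> i \<le> n - 1 \<Longrightarrow> 1 \<le> j \<Longrightarrow> j \<le> n - 1 \<Longrightarrow> i + 2 \<le> j \<or> j + 2 \<le> i \<Longrightarrow>
    vb_eqv n [s i, r j] [r j, s i]"
  by (rule vb_relation_eqv) (auto simp: vb_relations_def)

lemma rho_rho_sigma_eqv:
  "1 \<le> i \<Longrightarrow> i \<le> n - 2 \<Longrightarrow> vb_eqv n [r i, r (i+1), s i] [s (i+1), r i, r (i+1)]"
  by (rule vb_relation_eqv) (auto simp: vb_relations_def)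

lemma rho_inverse_eqv:
  assumes "1 \<le> k" "k \<le> n - 1"
  shows "vb_eqv n [(True, Rho k)] [r k]"
proof -
  have "vb_eqv n [(True, Rho k)] [r k, r k, (True, Rho k)]"
    by (rule vb_eqv_contextI[OF vb_eqv.sym[OF rho_square_eqv[OF assms]],
          where u="[]" and v="[(True, Rho k)]"]) (use assms in simp_all)
  also have "vb_eqv n [r k, r k, (True, Rho k)] [r k]"
    by (rule vb_eqv_contextI[OF cancel_eqv[of "r k" n], where u="[r k]" and v="[]"])
       (use assms in simp_all)
  finally show ?thesis .
qed

definition winv :: "word \<Rightarrow> word" where
  "winv w = rev (map linv w)"

lemma winv_simps [simp]:
  "winv [] = []" "winv (x # w) = winv w @ [linv x]"
  "winv (u @ v) = winv v @ winv u" "winv (winv w) = w"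
  by (auto simp: winv_def rev_map comp_def)

lemma winv_in_lists [simp]: "winv w \<in> lists (letters n) \<longleftrightarrow> w \<in> lists (letters n)"
  by (induction w) auto

lemma append_winv_eqv_Nil: "w \<in> lists (letters n) \<Longrightarrow> vb_eqv n (w @ winv w) []"
proof (induction w)
  case Nil
  then show ?case using vb_eqv.refl[of "[]" n] by simp
next
  case (Cons x w)
  then have x: "x \<in> letters n" and w: "w \<in> lists (letters n)" by auto
  have "vb_eqv n ((x # w) @ winv (x # w)) ([x] @ [] @ [linv x])"
    using vb_eqv_context[OF Cons.IH[OF w], of "[x]" "[linv x]"] x by simp
  also have "vb_eqv n ([x] @ [] @ [linv x]) []"
    using cancel_eqv[OF x] by simp
  finally show ?case .
qed

lemma winv_append_eqv_Nil: "w \<in> lists (letters n) \<Longrightarrow> vb_eqv n (winv w @ w) []"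
  using append_winv_eqv_Nil[of "winv w" n] by simp

section \<open>Invariants of the word congruence\<close>

lemma nu_word_simps [simp]:
  "nu_word [] = id" "nu_word (x # w) = nu_letter x \<circ> nu_word w"
  by (auto simp: nu_word_def)

lemma mu_word_simps [simp]:
  "mu_word [] = id" "mu_word (x # w) = mu_letter x \<circ> mu_word w"
  by (auto simp: mu_word_def)

lemma nu_word_append [simp]: "nu_word (u @ v) = nu_word u \<circ> nu_word v"
  by (induction u) auto

lemma mu_word_append [simp]: "mu_word (u @ v) = mu_word u \<circ> mu_word v"
  by (induction u) auto

lemma adj_apply [simp]:
  "adj i i = Suc i" "adj i (Suc i) = i" "k \<noteq> i \<Longrightarrow> k \<noteq> Suc i \<Longrightarrow> adj i k = k"
  by (auto simp: adj_def)

lemma adj_adj [simp]: "adj i \<circ> adj i = id"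
  by (auto simp: adj_def fun_eq_iff)

lemma nu_letter_linv [simp]: "nu_letter (linv x) = nu_letter x"
  by (cases x) (auto simp: linv_def)

lemma nu_letter_involution [simp]: "nu_letter x \<circ> nu_letter x = id"
  by (cases x) auto

text \<open>On \<open>VP\<^sub>n\<close> this is the exponent sum modulo 2
  of the generators \<open>\<lambda>\<^sub>i\<^sub>j\<close>, that is, the abelianisation of \<open>VP\<^sub>n\<close> reduced
  mod 2.\<close>

fun crossing :: "(nat \<Rightarrow> nat) \<Rightarrow> letter \<Rightarrow> nat \<times> nat \<Rightarrow> bool" where
  "crossing \<pi> (b, Sig i) = (\<lambda>p. p = (if b then (\<pi> (Suc i), \<pi> i) else (\<pi> i, \<pi> (Suc i))))"
| "crossing \<pi> (b, Rho i) = (\<lambda>p. False)"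

fun crossings :: "(nat \<Rightarrow> nat) \<Rightarrow> word \<Rightarrow> nat \<times> nat \<Rightarrow> bool" where
  "crossings \<pi> [] = (\<lambda>p. False)"
| "crossings \<pi> (x # w) = (\<lambda>p. crossing \<pi> x p \<noteq> crossings (\<pi> \<circ> nu_letter x) w p)"

lemma crossings_append:
  "crossings \<pi> (u @ v) = (\<lambda>p. crossings \<pi> u p \<noteq> crossings (\<pi> \<circ> nu_word u) v p)"
  by (induction u arbitrary: \<pi>) (auto simp: fun_eq_iff comp_assoc)

lemma crossings_pure_append:
  "nu_word u = id \<Longrightarrow> crossings id (u @ v) = (\<lambda>p. crossings id u p \<noteq> crossings id v p)"
  by (simp add: crossings_append)

lemma vb_relation_invariants:
  assumes "(l, l') \<in> vb_relations n"
  shows "nu_word l = nu_word l' \<and> mu_word l = mu_word l' \<and> crossings \<pi> l = crossings \<pi> l'"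
  using assms unfolding vb_relations_def by (auto simp: adj_def fun_eq_iff)

lemma cancel_invariants:
  "nu_word [x, linv x] = id \<and> mu_word [x, linv x] = id \<and> crossings \<pi> [x, linv x] = (\<lambda>p. False)"
  by (cases x; case_tac b; auto simp: linv_def fun_eq_iff)

lemma vb_eqv_invariants:
  "vb_eqv n u v \<Longrightarrow>
    nu_word u = nu_word v \<and> mu_word u = mu_word v \<and> (\<forall>\<pi>. crossings \<pi> u = crossings \<pi> v)"
proof (induction rule: vb_eqv.induct)
  case (cancel u v x)
  have "nu_word ([x, linv x] @ v) = nu_word v" "mu_word ([x, linv x] @ v) = mu_word v"
    using cancel_invariants[of x] by (simp_all only: nu_word_append mu_word_append) simp_all
  moreover have "crossings \<pi> ([x, linv x] @ v) = crossings \<pi> v" for \<pi>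
    using cancel_invariants[of x \<pi>] unfolding crossings_append by (simp add: fun_eq_iff)
  ultimately show ?case by (simp only: nu_word_append mu_word_append crossings_append) simp
next
  case (rel lhs rhs u v)
  have "nu_word (lhs @ v) = nu_word (rhs @ v)" "mu_word (lhs @ v) = mu_word (rhs @ v)"
    using vb_relation_invariants[OF rel(1)] by simp_all
  moreover have "crossings \<pi> (lhs @ v) = crossings \<pi> (rhs @ v)" for \<pi>
    using vb_relation_invariants[OF rel(1), of \<pi>] vb_relation_invariants[OF rel(1), of id]
    unfolding crossings_append by simp
  ultimately show ?case by (simp only: nu_word_append mu_word_append crossings_append) simp
qed auto

section \<open>Words in the \<open>\<rho>\<^sub>i\<close> with trivial permutation\<close>

fun is_rho :: "letter \<Rightarrow> bool" where
  "is_rho (b, Rho k) = True"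
| "is_rho (b, Sig k) = False"

lemma is_rho_linv [simp]: "is_rho (linv x) = is_rho x"
  by (cases x, rename_tac b g, case_tac g) auto

lemma mu_word_filter_is_rho: "mu_word (filter is_rho w) = mu_word w"
  by (induction w) (auto elim!: is_rho.elims)

lemma rho_commute_list_eqv:
  assumes j: "1 \<le> j" "j \<le> n - 1"
    and far: "\<forall>l\<in>set ls. 1 \<le> l \<and> l \<le> n - 1 \<and> (l + 2 \<le> j \<or> j + 2 \<le> l)"
  shows "vb_eqv n (map r ls @ [r j]) ([r j] @ map r ls)"
  using far
proof (induction ls)
  case Nil
  then show ?case using j vb_eqv.refl[of "[r j]" n] by simp
next
  case (Cons l ls)
  have "vb_eqv n (r l # map r ls @ [r j]) (r l # r j # map r ls)"
    by (rule vb_eqv_contextI[OF Cons.IH, where u="[r l]" and v="[]"]) (use Cons.prems in auto)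
  also have "vb_eqv n (r l # r j # map r ls) (r j # r l # map r ls)"
    by (rule vb_eqv_contextI[OF rho_commute_eqv, where u="[]" and v="map r ls"])
       (use Cons.prems j in auto)
  finally show ?case by simp
qed

definition rho_desc :: "nat \<Rightarrow> nat \<Rightarrow> word" where
  "rho_desc k m = map r (rev [k..<m])"

lemma rho_desc_split: "k \<le> j \<Longrightarrow> j \<le> m \<Longrightarrow> rho_desc k m = rho_desc j m @ rho_desc k j"
  unfolding rho_desc_def using upt_add_eq_append[of k j "m - j"] by simp

lemma rho_desc_empty [simp]: "rho_desc m m = []"
  by (simp add: rho_desc_def)

lemma rho_desc_single [simp]: "rho_desc k (Suc k) = [r k]"
  by (simp add: rho_desc_def)

lemma rho_desc_in_lists: "1 \<le> k \<Longrightarrow> m \<le> n \<Longrightarrow> rho_desc k m \<in> lists (letters n)"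
  by (auto simp: rho_desc_def le_diff_conv2)

lemma mu_word_rho_desc: "k \<le> m \<Longrightarrow> mu_word (rho_desc k m) k = m"
proof (induction m)
  case (Suc m)
  then show ?case
    by (cases "k = Suc m") (auto simp: rho_desc_def upt_Suc_append)
qed simp

lemma mu_word_rho_fixes: "\<forall>j\<in>set js. Suc j < m \<Longrightarrow> mu_word (map r js) m = m"
  by (induction js) auto

text \<open>Commute \<open>\<rho>\<^sub>j\<close> left to \<open>\<rho>\<^sub>j\<rho>\<^sub>j\<^sub>-\<^sub>1\<close>, apply the braid relation, and commute
  \<open>\<rho>\<^sub>j\<^sub>-\<^sub>1\<close> to the front.\<close>

lemma rho_desc_shift_eqv:
  assumes kj: "1 \<le> k" "k < j" and jm: "j < m" "m \<le> n"
  shows "vb_eqv n (rho_desc k m @ [r j]) ([r (j - 1)] @ rho_desc k m)"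
proof -
  define i where "i = j - 1"
  have ij: "j = Suc i" "k \<le> i" using kj unfolding i_def by auto
  have split: "rho_desc k m = rho_desc (Suc j) m @ [r j, r i] @ rho_desc k i"
    using rho_desc_split[of j "Suc j" m] rho_desc_split[of i j m] rho_desc_split[of k i m] ij jm
    by simp
  define P where "P = rho_desc (Suc j) m"
  define T where "T = rho_desc k i"
  have P: "P \<in> lists (letters n)" and T: "T \<in> lists (letters n)"
    unfolding P_def T_def using kj jm ij rho_desc_in_lists by simp_all
  have far_T: "\<forall>l\<in>set (rev [k..<i]). 1 \<le> l \<and> l \<le> n - 1 \<and> (l + 2 \<le> j \<or> j + 2 \<le> l)"
    using kj jm ij by auto
  have far_P: "\<forall>l\<in>set (rev [Suc j..<m]). 1 \<le> l \<and> l \<le> n - 1 \<and> (l + 2 \<le> i \<or> i + 2 \<le> l)"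
    using jm ij by auto
  have j1: "1 \<le> j" "j \<le> n - 1" and i1: "1 \<le> i" "i \<le> n - 2"
    using kj jm ij by auto
  have "vb_eqv n (P @ [r j, r i] @ T @ [r j]) (P @ [r j, r i] @ [r j] @ T)"
    by (rule vb_eqv_contextI[OF rho_commute_list_eqv[OF j1 far_T],
          where u="P @ [r j, r i]" and v="[]"])
       (use P j1 i1 in \<open>auto simp: T_def rho_desc_def\<close>)
  also have "vb_eqv n \<dots> (P @ [r i, r j, r i] @ T)"
    by (rule vb_eqv_contextI[OF vb_eqv.sym[OF rho_braid_eqv[OF i1]], where u="P" and v="T"])
       (use P T ij in auto)
  also have "vb_eqv n \<dots> ([r i] @ P @ [r j, r i] @ T)"
    by (rule vb_eqv_contextI[OF rho_commute_list_eqv[OF _ _ far_P],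
          where u="[]" and v="[r j, r i] @ T"])
       (use T j1 i1 in \<open>auto simp: P_def rho_desc_def\<close>)
  finally show ?thesis
    by (simp add: split P_def T_def i_def)
qed

lemma rho_word_coset_form:
  assumes m: "1 \<le> m" "m \<le> n" and js: "\<forall>j\<in>set js. 1 \<le> j \<and> j < m"
  shows "\<exists>js' k. (\<forall>j\<in>set js'. 1 \<le> j \<and> Suc j < m) \<and> 1 \<le> k \<and> k \<le> m \<and>
           vb_eqv n (map r js) (map r js' @ rho_desc k m)"
  using js
proof (induction js rule: rev_induct)
  case Nil
  show ?case
    by (rule exI[of _ "[]"], rule exI[of _ m]) (use m vb_eqv.refl[of "[]" n] in simp)
next
  case (snoc j js)
  from snoc.prems have j: "1 \<le> j" "j < m" by auto
  from snoc obtain js' k where js': "\<forall>j\<in>set js'. 1 \<le> j \<and> Suc j < m" and k: "1 \<le> k" "k \<le> m"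
    and E: "vb_eqv n (map r js) (map r js' @ rho_desc k m)" by auto
  have js'_lists: "map r js' \<in> lists (letters n)"
    using js' m by (force simp: le_diff_conv2)
  have E': "vb_eqv n (map r (js @ [j])) (map r js' @ rho_desc k m @ [r j])"
    using vb_eqv_append[OF E vb_eqv.refl[of "[r j]" n]] j m by simp
  consider "j + 2 \<le> k" | "j + 1 = k" | "j = k" | "k < j" by linarith
  then show ?case
  proof cases
    case 1
    have "vb_eqv n (rho_desc k m @ [r j]) ([r j] @ rho_desc k m)"
      unfolding rho_desc_def by (rule rho_commute_list_eqv) (use j k 1 m in auto)
    from vb_eqv.trans[OF E' vb_eqv_append_left[OF this js'_lists]]
    have "vb_eqv n (map r (js @ [j])) (map r (js' @ [j]) @ rho_desc k m)"
      by simp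
    then show ?thesis using js' j k 1 by (intro exI[of _ "js' @ [j]"] exI[of _ k]) auto
  next
    case 2
    then have "k = Suc j" by simp
    then have "rho_desc k m @ [r j] = rho_desc j m"
      using rho_desc_split[of j "Suc j" m] k by simp
    then show ?thesis using E' js' j by (intro exI[of _ js'] exI[of _ j]) auto
  next
    case 3
    have "vb_eqv n (map r js' @ rho_desc k m @ [r j]) (map r js' @ rho_desc (Suc k) m)"
      using vb_eqv_context[OF rho_square_eqv[of k n], of "map r js' @ rho_desc (Suc k) m" "[]"]
        rho_desc_split[of k "Suc k" m] rho_desc_in_lists[of "Suc k" m n] js'_lists 3 j m
      by simp
    then show ?thesis
      using vb_eqv.trans[OF E'] js' j 3 by (intro exI[of _ js'] exI[of _ "Suc k"]) auto
  next
    case 4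
    have "vb_eqv n (map r js' @ rho_desc k m @ [r j]) (map r js' @ [r (j - 1)] @ rho_desc k m)"
      using vb_eqv_append_left[OF rho_desc_shift_eqv[OF k(1) 4 j(2) m(2)] js'_lists] .
    with E' have "vb_eqv n (map r (js @ [j])) (map r (js' @ [j - 1]) @ rho_desc k m)"
      using vb_eqv.trans by fastforce
    then show ?thesis using js' j k 4 by (intro exI[of _ "js' @ [j - 1]"] exI[of _ k]) auto
  qed
qed

lemma rho_index_word_trivial:
  "m \<le> n \<Longrightarrow> \<forall>j\<in>set js. 1 \<le> j \<and> j < m \<Longrightarrow> mu_word (map r js) = id \<Longrightarrow>
    vb_eqv n (map r js) []"
proof (induction m arbitrary: js)
  case 0
  then show ?case using vb_eqv.refl[of "[]" n] by (cases js) auto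
next
  case (Suc m)
  obtain js' k where js': "\<forall>j\<in>set js'. 1 \<le> j \<and> j < m" and k: "1 \<le> k" "k \<le> Suc m"
    and E: "vb_eqv n (map r js) (map r js' @ rho_desc k (Suc m))"
    using rho_word_coset_form[of "Suc m" n js] Suc.prems by auto
  \<comment> \<open>only the coset factor \<open>\<rho>\<^sub>m\<cdots>\<rho>\<^sub>k\<close> moves strand \<open>k\<close>, namely to \<open>Suc m\<close>\<close>
  have "mu_word (map r js) k = Suc m"
    using vb_eqv_invariants[OF E] mu_word_rho_desc[OF k(2)] mu_word_rho_fixes[of js' "Suc m"] js'
    by simp
  then have "k = Suc m"
    using Suc.prems(3) by simp
  then have E': "vb_eqv n (map r js) (map r js')"
    using E by simp
  then have "mu_word (map r js') = id"
    using vb_eqv_invariants[OF E'] Suc.prems(3) by metis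
  then have "vb_eqv n (map r js') []"
    using Suc.IH[of js'] Suc.prems(1) js' by simp
  then show ?case using E' vb_eqv.trans by blast
qed

lemma rho_word_eqv_indices:
  "p \<in> lists (letters n) \<Longrightarrow> \<forall>x\<in>set p. is_rho x \<Longrightarrow> vb_eqv n p (map (\<lambda>x. r (gidx (snd x))) p)"
proof (induction p)
  case Nil
  then show ?case using vb_eqv.refl[of "[]" n] by simp
next
  case (Cons y p)
  obtain b k where y: "y = (b, Rho k)"
    using Cons.prems by (cases y, rename_tac b g, case_tac g) auto
  have k: "1 \<le> k" "k \<le> n - 1"
    using Cons.prems y by auto
  have "vb_eqv n [y] [r k]"
    using rho_inverse_eqv[OF k] vb_eqv.refl[of "[r k]" n] k y by (cases b) auto
  from vb_eqv_append[OF this Cons.IH] Cons.prems y show ?case by simp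
qed

lemma rho_word_trivial:
  assumes "p \<in> lists (letters n)" "\<forall>x\<in>set p. is_rho x" "mu_word p = id"
  shows "vb_eqv n p []"
proof -
  let ?js = "map (\<lambda>x. gidx (snd x)) p"
  have E: "vb_eqv n p (map r ?js)"
    using rho_word_eqv_indices[OF assms(1,2)] by (simp add: comp_def)
  have "mu_word (map r ?js) = id"
    using vb_eqv_invariants[OF E] assms(3) by metis
  moreover have "\<forall>j\<in>set ?js. 1 \<le> j \<and> j < n"
    using assms(1) by (fastforce simp: letters_def)
  ultimately have "vb_eqv n (map r ?js) []"
    using rho_index_word_trivial[of n n ?js] by simp
  then show ?thesis using E vb_eqv.trans by blast
qed

section \<open>Homomorphisms from \<open>H\<^sub>n\<close> to an elementary abelian 2-group\<close>

definition H_words :: "nat \<Rightarrow> word set" where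
  "H_words n = {w \<in> lists (letters n). mu_word w = id}"

lemma Nil_in_H_words [simp]: "[] \<in> H_words n"
  by (simp add: H_words_def)

lemma append_in_H_words: "u \<in> H_words n \<Longrightarrow> v \<in> H_words n \<Longrightarrow> u @ v \<in> H_words n"
  by (simp add: H_words_def)

lemma sigma_in_H_words: "1 \<le> i \<Longrightarrow> i \<le> n - 1 \<Longrightarrow> [(b, Sig i)] \<in> H_words n"
  by (simp add: H_words_def)

lemma H_words_vb_eqv: "a \<in> H_words n \<Longrightarrow> vb_eqv n a b \<Longrightarrow> b \<in> H_words n"
  using vb_eqv_invariants vb_eqv_lists by (fastforce simp: H_words_def)

lemma mu_word_winv: "w \<in> lists (letters n) \<Longrightarrow> mu_word w \<circ> mu_word (winv w) = id"
  using vb_eqv_invariants[OF append_winv_eqv_Nil[of w n]] by simp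

definition conj_word :: "word \<Rightarrow> word \<Rightarrow> word" where
  "conj_word p a = p @ a @ winv p"

lemma conj_word_Nil [simp]: "conj_word [] a = a"
  by (simp add: conj_word_def)

lemma conj_word_conj_word: "conj_word q (conj_word p a) = conj_word (q @ p) a"
  by (simp add: conj_word_def)

lemma conj_word_in_H_words:
  "p \<in> lists (letters n) \<Longrightarrow> a \<in> H_words n \<Longrightarrow> conj_word p a \<in> H_words n"
  using mu_word_winv[of p n] by (auto simp: H_words_def conj_word_def comp_assoc)

lemma conj_word_append_eqv:
  assumes q: "q \<in> lists (letters n)" and a: "a \<in> lists (letters n)" and b: "b \<in> lists (letters n)"
  shows "vb_eqv n (conj_word q a @ conj_word q b) (conj_word q (a @ b))"
  using vb_eqv_context[OF winv_append_eqv_Nil[OF q], of "q @ a" "b @ winv q"] q a b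
  by (simp add: conj_word_def)

lemma conj_word_vb_eqv:
  "vb_eqv n a b \<Longrightarrow> q \<in> lists (letters n) \<Longrightarrow> vb_eqv n (conj_word q a) (conj_word q b)"
  unfolding conj_word_def by (rule vb_eqv_context) auto

definition xor_hom :: "nat \<Rightarrow> (word \<Rightarrow> nat \<times> nat \<Rightarrow> bool) \<Rightarrow> bool" where
  "xor_hom n \<Psi> \<longleftrightarrow>
     (\<forall>u \<in> H_words n. \<forall>v \<in> H_words n. \<Psi> (u @ v) = (\<lambda>p. \<Psi> u p \<noteq> \<Psi> v p)) \<and>
     (\<forall>u v. u \<in> H_words n \<longrightarrow> vb_eqv n u v \<longrightarrow> \<Psi> u = \<Psi> v)"

lemma xor_hom_append:
  "xor_hom n \<Psi> \<Longrightarrow> u \<in> H_words n \<Longrightarrow> v \<in> H_words n \<Longrightarrow> \<Psi> (u @ v) = (\<lambda>p. \<Psi> u p \<noteq> \<Psi> v p)"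
  by (simp add: xor_hom_def)

lemma xor_hom_vb_eqv: "xor_hom n \<Psi> \<Longrightarrow> u \<in> H_words n \<Longrightarrow> vb_eqv n u v \<Longrightarrow> \<Psi> u = \<Psi> v"
  by (simp add: xor_hom_def)

lemma xor_hom_Nil: "xor_hom n \<Psi> \<Longrightarrow> \<Psi> [] = (\<lambda>p. False)"
  using xor_hom_append[of n \<Psi> "[]" "[]"] by (auto simp: fun_eq_iff)

lemma xor_hom_conj_sigma_inverse:
  assumes \<Psi>: "xor_hom n \<Psi>" and i: "1 \<le> i" "i \<le> n - 1" and p: "p \<in> lists (letters n)"
  shows "\<Psi> (conj_word p [(True, Sig i)]) = \<Psi> (conj_word p [s i])"
proof -
  have H: "conj_word p [s i] \<in> H_words n" "conj_word p [(True, Sig i)] \<in> H_words n"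
    using conj_word_in_H_words[OF p] sigma_in_H_words[OF i] by auto
  have "vb_eqv n (conj_word p [s i] @ conj_word p [(True, Sig i)])
      (conj_word p ([s i] @ [(True, Sig i)]))"
    by (rule conj_word_append_eqv) (use p i in auto)
  also have "vb_eqv n \<dots> (conj_word p [])"
    using conj_word_vb_eqv[OF cancel_eqv[of "s i" n] p] i by simp
  also have "vb_eqv n \<dots> []"
    using append_winv_eqv_Nil[OF p] by (simp add: conj_word_def)
  finally have "\<Psi> (conj_word p [s i] @ conj_word p [(True, Sig i)]) = \<Psi> []"
    using xor_hom_vb_eqv[OF \<Psi>] H append_in_H_words by blast
  then show ?thesis
    using xor_hom_append[OF \<Psi> H] xor_hom_Nil[OF \<Psi>] by (auto simp: fun_eq_iff)
qed

text \<open>Equality of \<open>\<Psi>\<close>-values is not preserved by conjugation; this refinement is.\<close>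

definition conj_equiv :: "nat \<Rightarrow> (word \<Rightarrow> nat \<times> nat \<Rightarrow> bool) \<Rightarrow> word \<Rightarrow> word \<Rightarrow> bool" where
  "conj_equiv n \<Psi> a b \<longleftrightarrow> a \<in> H_words n \<and> b \<in> H_words n \<and>
     (\<forall>q \<in> lists (letters n). \<Psi> (conj_word q a) = \<Psi> (conj_word q b))"

lemma conj_equiv_refl: "a \<in> H_words n \<Longrightarrow> conj_equiv n \<Psi> a a"
  by (simp add: conj_equiv_def)

lemma conj_equiv_sym: "conj_equiv n \<Psi> a b \<Longrightarrow> conj_equiv n \<Psi> b a"
  by (auto simp: conj_equiv_def)

lemma conj_equiv_trans [trans]: "conj_equiv n \<Psi> a b \<Longrightarrow> conj_equiv n \<Psi> b c \<Longrightarrow> conj_equiv n \<Psi> a c"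
  by (auto simp: conj_equiv_def)

lemma conj_equiv_conj_word:
  "conj_equiv n \<Psi> a b \<Longrightarrow> p \<in> lists (letters n) \<Longrightarrow> conj_equiv n \<Psi> (conj_word p a) (conj_word p b)"
  by (auto simp: conj_equiv_def conj_word_conj_word conj_word_in_H_words)

lemma conj_equiv_value: "conj_equiv n \<Psi> a b \<Longrightarrow> \<Psi> a = \<Psi> b"
  unfolding conj_equiv_def by (metis conj_word_Nil lists.Nil)

lemma conj_equiv_of_vb_eqv:
  "xor_hom n \<Psi> \<Longrightarrow> a \<in> H_words n \<Longrightarrow> vb_eqv n a b \<Longrightarrow> conj_equiv n \<Psi> a b"
  unfolding conj_equiv_def
  using H_words_vb_eqv conj_word_vb_eqv xor_hom_vb_eqv conj_word_in_H_words by metis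

text \<open>In the target, \<open>\<Psi>(aba) = \<Psi>(b)\<close> and \<open>\<Psi>(bab) = \<Psi>(a)\<close>.\<close>

lemma conj_equiv_of_braid:
  assumes \<Psi>: "xor_hom n \<Psi>" and a: "a \<in> H_words n" and b: "b \<in> H_words n"
    and braid: "vb_eqv n (a @ b @ a) (b @ a @ b)"
  shows "conj_equiv n \<Psi> a b"
  unfolding conj_equiv_def
proof (intro conjI ballI a b)
  fix q assume q: "q \<in> lists (letters n)"
  have lists: "a \<in> lists (letters n)" "b \<in> lists (letters n)"
    using a b by (auto simp: H_words_def)
  have H: "conj_word q a \<in> H_words n" "conj_word q b \<in> H_words n"
    using conj_word_in_H_words q a b by auto
  have split: "vb_eqv n (conj_word q x @ conj_word q y @ conj_word q x) (conj_word q (x @ y @ x))"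
    if "x \<in> lists (letters n)" "y \<in> lists (letters n)" for x y
    by (rule vb_eqv.trans[OF vb_eqv_append[OF vb_eqv.refl conj_word_append_eqv]
          conj_word_append_eqv])
       (use q that in \<open>auto simp: conj_word_def\<close>)
  have "vb_eqv n (conj_word q a @ conj_word q b @ conj_word q a) (conj_word q (a @ b @ a))"
    using split[OF lists] .
  also have "vb_eqv n \<dots> (conj_word q (b @ a @ b))"
    using conj_word_vb_eqv[OF braid q] .
  also have "vb_eqv n \<dots> (conj_word q b @ conj_word q a @ conj_word q b)"
    using vb_eqv.sym[OF split[OF lists(2,1)]] .
  finally have "\<Psi> (conj_word q a @ conj_word q b @ conj_word q a) =
      \<Psi> (conj_word q b @ conj_word q a @ conj_word q b)"
    using xor_hom_vb_eqv[OF \<Psi>] H append_in_H_words by blast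
  then show "\<Psi> (conj_word q a) = \<Psi> (conj_word q b)"
    using xor_hom_append[OF \<Psi>] H append_in_H_words by (simp add: fun_eq_iff) metis
qed

lemma conj_equiv_sigma:
  assumes \<Psi>: "xor_hom n \<Psi>"
  shows "1 \<le> i \<Longrightarrow> i \<le> n - 1 \<Longrightarrow> conj_equiv n \<Psi> [s i] [s 1]"
proof (induction i)
  case (Suc i)
  show ?case
  proof (cases "i = 0")
    case True
    then show ?thesis using Suc by (auto intro!: conj_equiv_refl simp: H_words_def)
  next
    case False
    then have IH: "conj_equiv n \<Psi> [s i] [s 1]"
      using Suc by simp
    have "vb_eqv n [s i, s (Suc i), s i] [s (Suc i), s i, s (Suc i)]"
      using sigma_braid_eqv[of i n] Suc.prems False by simp
    then have "conj_equiv n \<Psi> [s i] [s (Suc i)]"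
      using conj_equiv_of_braid[OF \<Psi>, of "[s i]" "[s (Suc i)]"] Suc.prems False
      by (simp add: H_words_def)
    then show ?thesis using IH by (meson conj_equiv_sym conj_equiv_trans)
  qed
qed simp

abbreviation twisted_sigma1 :: word where
  "twisted_sigma1 \<equiv> [r 1, s 1, r 1]"

definition rho_conj :: "nat \<Rightarrow> word \<Rightarrow> word" where
  "rho_conj k a = [r k] @ a @ [r k]"

lemma rho_conj_in_H_words: "1 \<le> k \<Longrightarrow> k \<le> n - 1 \<Longrightarrow> a \<in> H_words n \<Longrightarrow> rho_conj k a \<in> H_words n"
  by (auto simp: H_words_def rho_conj_def)

lemma twisted_sigma1_in_H_words: "2 \<le> n \<Longrightarrow> twisted_sigma1 \<in> H_words n"
  by (auto simp: H_words_def)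

lemma conj_word_rho_eqv:
  assumes k: "1 \<le> k" "k \<le> n - 1" and a: "a \<in> lists (letters n)"
  shows "vb_eqv n (conj_word [(b, Rho k)] a) (rho_conj k a)"
proof (cases b)
  case True
  then show ?thesis
    using vb_eqv_append[OF rho_inverse_eqv[OF k] vb_eqv.refl[of "a @ [r k]"]] k a
    by (simp add: conj_word_def rho_conj_def)
next
  case False
  then show ?thesis
    using vb_eqv_append[OF vb_eqv.refl[of "[r k] @ a"] rho_inverse_eqv[OF k]] k a
    by (simp add: conj_word_def rho_conj_def)
qed

lemma rho_conj_1_twisted_sigma1_eqv: "2 \<le> n \<Longrightarrow> vb_eqv n (rho_conj 1 twisted_sigma1) [s 1]"
proof -
  assume n: "2 \<le> n"
  have "vb_eqv n [r 1, r 1, s 1, r 1, r 1] [s 1, r 1, r 1]"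
    by (rule vb_eqv_contextI[OF rho_square_eqv[of 1 n], where u="[]" and v="[s 1, r 1, r 1]"])
       (use n in auto)
  also have "vb_eqv n [s 1, r 1, r 1] [s 1]"
    by (rule vb_eqv_contextI[OF rho_square_eqv[of 1 n], where u="[s 1]" and v="[]"]) (use n in auto)
  finally show ?thesis by (simp add: rho_conj_def)
qed

lemma rho_conj_2_sigma1_eqv: "3 \<le> n \<Longrightarrow> vb_eqv n (rho_conj 2 [s 1]) (rho_conj 1 [s 2])"
proof -
  assume n: "3 \<le> n"
  have "vb_eqv n [r 1, s 2, r 1] [r 1, s 2, r 1, r 2, r 2]"
    by (rule vb_eqv_contextI[OF vb_eqv.sym[OF rho_square_eqv[of 2 n]],
          where u="[r 1, s 2, r 1]" and v="[]"])
       (use n in auto)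
  also have "vb_eqv n [r 1, s 2, r 1, r 2, r 2] [r 1, r 1, r 2, s 1, r 2]"
    by (rule vb_eqv_contextI[OF vb_eqv.sym[OF rho_rho_sigma_eqv[of 1 n]],
          where u="[r 1]" and v="[r 2]"])
       (use n in auto)
  also have "vb_eqv n [r 1, r 1, r 2, s 1, r 2] [r 2, s 1, r 2]"
    by (rule vb_eqv_contextI[OF rho_square_eqv[of 1 n], where u="[]" and v="[r 2, s 1, r 2]"])
       (use n in auto)
  finally show ?thesis by (simp add: rho_conj_def vb_eqv.sym)
qed

lemma rho_conj_far_sigma1_eqv: "3 \<le> k \<Longrightarrow> k \<le> n - 1 \<Longrightarrow> vb_eqv n (rho_conj k [s 1]) [s 1]"
proof -
  assume k: "3 \<le> k" "k \<le> n - 1"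
  have "vb_eqv n [r k, s 1, r k] [s 1, r k, r k]"
    by (rule vb_eqv_contextI[OF vb_eqv.sym[OF sigma_rho_commute_eqv[of 1 n k]],
          where u="[]" and v="[r k]"])
       (use k in auto)
  also have "vb_eqv n [s 1, r k, r k] [s 1]"
    by (rule vb_eqv_contextI[OF rho_square_eqv[of k n], where u="[s 1]" and v="[]"]) (use k in auto)
  finally show ?thesis by (simp add: rho_conj_def)
qed

lemma rho_conj_far_twisted_sigma1_eqv:
  "3 \<le> k \<Longrightarrow> k \<le> n - 1 \<Longrightarrow> vb_eqv n (rho_conj k twisted_sigma1) twisted_sigma1"
proof -
  assume k: "3 \<le> k" "k \<le> n - 1"
  have "vb_eqv n [r k, r 1, s 1, r 1, r k] [r 1, r k, s 1, r 1, r k]"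
    by (rule vb_eqv_contextI[OF rho_commute_eqv[of k n 1], where u="[]" and v="[s 1, r 1, r k]"])
       (use k in auto)
  also have "vb_eqv n [r 1, r k, s 1, r 1, r k] [r 1, s 1, r k, r 1, r k]"
    by (rule vb_eqv_contextI[OF vb_eqv.sym[OF sigma_rho_commute_eqv[of 1 n k]],
          where u="[r 1]" and v="[r 1, r k]"])
       (use k in auto)
  also have "vb_eqv n [r 1, s 1, r k, r 1, r k] [r 1, s 1, r 1, r k, r k]"
    by (rule vb_eqv_contextI[OF rho_commute_eqv[of k n 1], where u="[r 1, s 1]" and v="[r k]"])
       (use k in auto)
  also have "vb_eqv n [r 1, s 1, r 1, r k, r k] [r 1, s 1, r 1]"
    by (rule vb_eqv_contextI[OF rho_square_eqv[of k n], where u="[r 1, s 1, r 1]" and v="[]"])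
       (use k in auto)
  finally show ?thesis by (simp add: rho_conj_def)
qed

lemma conj_rho2_rho1_eqv:
  assumes n: "3 \<le> n" and a: "a \<in> lists (letters n)"
  shows "vb_eqv n (conj_word [r 2, r 1] a) ([r 2, r 1] @ a @ [r 1, r 2])"
proof -
  have "vb_eqv n ([r 2, r 1] @ a @ [(True, Rho 1), (True, Rho 2)])
      ([r 2, r 1] @ a @ [r 1, (True, Rho 2)])"
    by (rule vb_eqv_contextI[OF rho_inverse_eqv[of 1 n],
          where u="[r 2, r 1] @ a" and v="[(True, Rho 2)]"])
       (use n a in auto)
  also have "vb_eqv n \<dots> ([r 2, r 1] @ a @ [r 1, r 2])"
    by (rule vb_eqv_contextI[OF rho_inverse_eqv[of 2 n],
          where u="[r 2, r 1] @ a @ [r 1]" and v="[]"])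
       (use n a in auto)
  finally show ?thesis by (simp add: conj_word_def)
qed

lemma rho2_rho1_conj_sigma2_eqv: "3 \<le> n \<Longrightarrow> vb_eqv n [r 2, r 1, s 2, r 1, r 2] [s 1]"
proof -
  assume n: "3 \<le> n"
  have "vb_eqv n [r 2, r 1, s 2, r 1, r 2] [r 2, r 1, r 1, r 2, s 1]"
    by (rule vb_eqv_contextI[OF vb_eqv.sym[OF rho_rho_sigma_eqv[of 1 n]],
          where u="[r 2, r 1]" and v="[]"])
       (use n in auto)
  also have "vb_eqv n [r 2, r 1, r 1, r 2, s 1] [r 2, r 2, s 1]"
    by (rule vb_eqv_contextI[OF rho_square_eqv[of 1 n],
          where u="[r 2]" and v="[r 2, s 1]"])
       (use n in auto)
  also have "vb_eqv n [r 2, r 2, s 1] [s 1]"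
    by (rule vb_eqv_contextI[OF rho_square_eqv[of 2 n], where u="[]" and v="[s 1]"]) (use n in auto)
  finally show ?thesis .
qed

lemma rho_conj_sigma1_cases:
  assumes \<Psi>: "xor_hom n \<Psi>" and n: "3 \<le> n" and k: "1 \<le> k" "k \<le> n - 1"
  shows "conj_equiv n \<Psi> (rho_conj k [s 1]) [s 1] \<or> conj_equiv n \<Psi> (rho_conj k [s 1]) twisted_sigma1"
proof -
  consider "k = 1" | "k = 2" | "3 \<le> k" using k(1) by linarith
  then show ?thesis
  proof cases
    case 1
    then show ?thesis
      using twisted_sigma1_in_H_words n by (auto simp: rho_conj_def intro: conj_equiv_refl)
  next
    case 2
    have "conj_equiv n \<Psi> (rho_conj 2 [s 1]) (rho_conj 1 [s 2])"
      by (rule conj_equiv_of_vb_eqv[OF \<Psi> rho_conj_in_H_words[OF _ _ sigma_in_H_words]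
            rho_conj_2_sigma1_eqv[OF n]])
         (use n in auto)
    also have "conj_equiv n \<Psi> \<dots> (conj_word [r 1] [s 2])"
      by (rule conj_equiv_of_vb_eqv[OF \<Psi> rho_conj_in_H_words[OF _ _ sigma_in_H_words]
            vb_eqv.sym[OF conj_word_rho_eqv]])
         (use n in auto)
    also have "conj_equiv n \<Psi> \<dots> (conj_word [r 1] [s 1])"
      by (rule conj_equiv_conj_word[OF conj_equiv_sigma[OF \<Psi>]]) (use n in auto)
    also have "conj_equiv n \<Psi> \<dots> (rho_conj 1 [s 1])"
      by (rule conj_equiv_of_vb_eqv[OF \<Psi> conj_word_in_H_words[OF _ sigma_in_H_words]
            conj_word_rho_eqv])
         (use n in auto)
    finally show ?thesis using 2 by (simp add: rho_conj_def)
  next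
    case 3
    have "conj_equiv n \<Psi> (rho_conj k [s 1]) [s 1]"
      by (rule conj_equiv_of_vb_eqv[OF \<Psi> rho_conj_in_H_words[OF k sigma_in_H_words]
            rho_conj_far_sigma1_eqv[OF 3 k(2)]])
         (use n in auto)
    then show ?thesis ..
  qed
qed

lemma rho_conj_twisted_sigma1_cases:
  assumes \<Psi>: "xor_hom n \<Psi>" and n: "3 \<le> n" and k: "1 \<le> k" "k \<le> n - 1"
  shows "conj_equiv n \<Psi> (rho_conj k twisted_sigma1) [s 1] \<or>
    conj_equiv n \<Psi> (rho_conj k twisted_sigma1) twisted_sigma1"
proof -
  have H: "rho_conj k twisted_sigma1 \<in> H_words n"
    using rho_conj_in_H_words[OF k twisted_sigma1_in_H_words] n by simp
  consider "k = 1" | "k = 2" | "3 \<le> k" using k(1) by linarith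
  then show ?thesis
  proof cases
    case 1
    then show ?thesis
      using conj_equiv_of_vb_eqv[OF \<Psi> H] rho_conj_1_twisted_sigma1_eqv n by auto
  next
    case 2
    have "vb_eqv n (rho_conj 2 twisted_sigma1) (conj_word [r 2, r 1] [s 1])"
      using vb_eqv.sym[OF conj_rho2_rho1_eqv[OF n, of "[s 1]"]] n by (simp add: rho_conj_def)
    then have "conj_equiv n \<Psi> (rho_conj 2 twisted_sigma1) (conj_word [r 2, r 1] [s 1])"
      using conj_equiv_of_vb_eqv[OF \<Psi> H] 2 by simp
    also have "conj_equiv n \<Psi> \<dots> (conj_word [r 2, r 1] [s 2])"
      by (rule conj_equiv_conj_word[OF conj_equiv_sym[OF conj_equiv_sigma[OF \<Psi>]]]) (use n in auto)
    also have "conj_equiv n \<Psi> \<dots> [s 1]"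
    proof (rule conj_equiv_of_vb_eqv[OF \<Psi> conj_word_in_H_words[OF _ sigma_in_H_words]])
      have "vb_eqv n (conj_word [r 2, r 1] [s 2]) [r 2, r 1, s 2, r 1, r 2]"
        using conj_rho2_rho1_eqv[OF n, of "[s 2]"] n by simp
      then show "vb_eqv n (conj_word [r 2, r 1] [s 2]) [s 1]"
        using rho2_rho1_conj_sigma2_eqv[OF n] by (rule vb_eqv.trans)
    qed (use n in auto)
    finally show ?thesis using 2 by simp
  next
    case 3
    then show ?thesis
      using conj_equiv_of_vb_eqv[OF \<Psi> H] rho_conj_far_twisted_sigma1_eqv k by auto
  qed
qed

lemma rho_word_conj_sigma_cases:
  assumes \<Psi>: "xor_hom n \<Psi>" and n: "3 \<le> n" and i: "1 \<le> i" "i \<le> n - 1"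
  shows "p \<in> lists (letters n) \<Longrightarrow> \<forall>x\<in>set p. is_rho x \<Longrightarrow>
    conj_equiv n \<Psi> (conj_word p [s i]) [s 1] \<or> conj_equiv n \<Psi> (conj_word p [s i]) twisted_sigma1"
proof (induction p)
  case Nil
  then show ?case using conj_equiv_sigma[OF \<Psi> i] by simp
next
  case (Cons y p)
  obtain b k where y: "y = (b, Rho k)"
    using Cons.prems by (cases y, rename_tac b g, case_tac g) auto
  have k: "1 \<le> k" "k \<le> n - 1" and y_lists: "[y] \<in> lists (letters n)"
    using Cons.prems y by auto
  have step: "conj_equiv n \<Psi> (conj_word (y # p) [s i]) (rho_conj k X)"
    if "conj_equiv n \<Psi> (conj_word p [s i]) X" for X
  proof -
    have X: "X \<in> H_words n"
      using that by (simp add: conj_equiv_def)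
    have "conj_equiv n \<Psi> (conj_word (y # p) [s i]) (conj_word [y] X)"
      using conj_equiv_conj_word[OF that y_lists] by (simp add: conj_word_conj_word)
    also have "conj_equiv n \<Psi> \<dots> (rho_conj k X)"
      using conj_equiv_of_vb_eqv[OF \<Psi> conj_word_in_H_words[OF y_lists X]]
        conj_word_rho_eqv[OF k] X y
      by (simp add: H_words_def)
    finally show ?thesis .
  qed
  from Cons.IH Cons.prems consider
    "conj_equiv n \<Psi> (conj_word p [s i]) [s 1]" | "conj_equiv n \<Psi> (conj_word p [s i]) twisted_sigma1"
    by auto
  then show ?case
  proof cases
    case 1
    then show ?thesis
      using rho_conj_sigma1_cases[OF \<Psi> n k] step conj_equiv_trans by blast
  next
    case 2
    then show ?thesis
      using rho_conj_twisted_sigma1_cases[OF \<Psi> n k] step conj_equiv_trans by blast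
  qed
qed

definition in_span2 :: "('a \<Rightarrow> bool) \<Rightarrow> ('a \<Rightarrow> bool) \<Rightarrow> ('a \<Rightarrow> bool) \<Rightarrow> bool" where
  "in_span2 V1 V2 v \<longleftrightarrow> (\<exists>a b. v = (\<lambda>p. (a \<and> V1 p) \<noteq> (b \<and> V2 p)))"

lemma in_span2_zero: "in_span2 V1 V2 (\<lambda>p. False)"
  unfolding in_span2_def by auto

lemma in_span2_add1: "in_span2 V1 V2 v \<Longrightarrow> in_span2 V1 V2 (\<lambda>p. v p \<noteq> V1 p)"
  unfolding in_span2_def by (metis (full_types))

lemma in_span2_add2: "in_span2 V1 V2 v \<Longrightarrow> in_span2 V1 V2 (\<lambda>p. v p \<noteq> V2 p)"
  unfolding in_span2_def by (metis (full_types))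

lemma card_le_4_if_in_span2:
  assumes "A \<subseteq> Collect (in_span2 V1 V2)"
  shows "card A \<le> 4"
proof -
  let ?f = "\<lambda>(a, b). \<lambda>p. (a \<and> V1 p) \<noteq> (b \<and> V2 p)"
  have "A \<subseteq> ?f ` UNIV"
  proof
    fix v assume "v \<in> A"
    then obtain a b where "v = (\<lambda>p. (a \<and> V1 p) \<noteq> (b \<and> V2 p))"
      using assms unfolding in_span2_def by blast
    then show "v \<in> ?f ` UNIV"
      by (intro image_eqI[where x="(a, b)"]) auto
  qed
  then have "card A \<le> card (?f ` UNIV)"
    by (rule card_mono[rotated]) simp
  also have "\<dots> \<le> card (UNIV :: (bool \<times> bool) set)"
    by (rule card_image_le) simp
  finally show ?thesis
    by (simp add: UNIV_Times_UNIV[symmetric] card_cartesian_product del: UNIV_Times_UNIV)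
qed

lemma filter_is_rho_in_lists: "w \<in> lists (letters n) \<Longrightarrow> filter is_rho w \<in> lists (letters n)"
  by auto

lemma rho_corrected_in_H_words:
  "w \<in> lists (letters n) \<Longrightarrow> w @ winv (filter is_rho w) \<in> H_words n"
  using mu_word_winv[OF filter_is_rho_in_lists[of w n]]
  by (auto simp: H_words_def mu_word_filter_is_rho)

text \<open>Appending a letter \<open>x = \<sigma>\<^sub>i\<^sup>\<plusminus>\<^sup>1\<close> to \<open>w\<close> multiplies \<open>w p\<^sup>-\<^sup>1\<close>, where \<open>p\<close> is the
  \<open>\<rho>\<close>-part of \<open>w\<close>, by the conjugate \<open>p x p\<^sup>-\<^sup>1\<close>.\<close>

lemma xor_hom_rho_corrected_in_span2:
  assumes \<Psi>: "xor_hom n \<Psi>" and n: "3 \<le> n"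
  shows "w \<in> lists (letters n) \<Longrightarrow>
    in_span2 (\<Psi> [s 1]) (\<Psi> twisted_sigma1) (\<Psi> (w @ winv (filter is_rho w)))"
proof (induction w rule: rev_induct)
  case Nil
  then show ?case using xor_hom_Nil[OF \<Psi>] in_span2_zero by simp
next
  case (snoc x w)
  have w: "w \<in> lists (letters n)" and x: "x \<in> letters n"
    using snoc.prems by auto
  define p where "p = filter is_rho w"
  have p: "p \<in> lists (letters n)" "\<forall>y\<in>set p. is_rho y"
    using w by (auto simp: p_def)
  have IH: "in_span2 (\<Psi> [s 1]) (\<Psi> twisted_sigma1) (\<Psi> (w @ winv p))"
    using snoc.IH w by (simp add: p_def)
  have H: "w @ winv p \<in> H_words n"
    using rho_corrected_in_H_words[OF w] by (simp add: p_def)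
  show ?case
  proof (cases "is_rho x")
    case True
    have "vb_eqv n (w @ [x, linv x] @ winv p) (w @ winv p)"
      by (rule vb_eqv.cancel) (use w x p in auto)
    then have "\<Psi> (w @ [x, linv x] @ winv p) = \<Psi> (w @ winv p)"
      using xor_hom_vb_eqv[OF \<Psi>] rho_corrected_in_H_words[OF snoc.prems] True
      by (simp add: p_def)
    then show ?thesis using IH True by (simp add: p_def)
  next
    case False
    then obtain b i where xb: "x = (b, Sig i)"
      by (cases x, rename_tac b g, case_tac g) auto
    have i: "1 \<le> i" "i \<le> n - 1"
      using x xb by auto
    have C: "conj_word p [x] \<in> H_words n"
      using conj_word_in_H_words[OF p(1) sigma_in_H_words[OF i]] xb by simp
    have "vb_eqv n (w @ (winv p @ p) @ ([x] @ winv p)) (w @ [] @ ([x] @ winv p))"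
      by (rule vb_eqv_context[OF winv_append_eqv_Nil[OF p(1)]]) (use w x p in auto)
    then have "\<Psi> ((w @ winv p) @ conj_word p [x]) = \<Psi> (w @ [x] @ winv p)"
      using xor_hom_vb_eqv[OF \<Psi> append_in_H_words[OF H C]] by (simp add: conj_word_def)
    then have split: "\<Psi> (w @ [x] @ winv p) = (\<lambda>q. \<Psi> (w @ winv p) q \<noteq> \<Psi> (conj_word p [x]) q)"
      using xor_hom_append[OF \<Psi> H C] by simp
    have "\<Psi> (conj_word p [x]) = \<Psi> (conj_word p [s i])"
      using xor_hom_conj_sigma_inverse[OF \<Psi> i p(1)] xb by (cases b) auto
    then have "\<Psi> (conj_word p [x]) = \<Psi> [s 1] \<or> \<Psi> (conj_word p [x]) = \<Psi> twisted_sigma1"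
      using rho_word_conj_sigma_cases[OF \<Psi> n i p] conj_equiv_value by metis
    then have "in_span2 (\<Psi> [s 1]) (\<Psi> twisted_sigma1) (\<Psi> (w @ [x] @ winv p))"
      by (elim disjE) (simp_all only: split in_span2_add1[OF IH] in_span2_add2[OF IH])
    then show ?thesis using False by (simp add: p_def)
  qed
qed

lemma xor_hom_H_words_in_span2:
  assumes \<Psi>: "xor_hom n \<Psi>" and n: "3 \<le> n" and w: "w \<in> H_words n"
  shows "in_span2 (\<Psi> [s 1]) (\<Psi> twisted_sigma1) (\<Psi> w)"
proof -
  have w_lists: "w \<in> lists (letters n)" and "mu_word w = id"
    using w by (auto simp: H_words_def)
  let ?q = "winv (filter is_rho w)"
  have "mu_word ?q = id"
    using mu_word_winv[OF filter_is_rho_in_lists[OF w_lists]] mu_word_filter_is_rho[of w]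
      \<open>mu_word w = id\<close>
    by simp
  moreover have "?q \<in> lists (letters n)"
    using filter_is_rho_in_lists[OF w_lists] by (simp only: winv_in_lists)
  moreover have "\<forall>x\<in>set ?q. is_rho x"
    by (auto simp: winv_def)
  ultimately have "vb_eqv n ?q []"
    using rho_word_trivial by blast
  then have "vb_eqv n (w @ ?q) (w @ [])"
    by (rule vb_eqv_append_left[OF _ w_lists])
  then have "\<Psi> (w @ ?q) = \<Psi> w"
    using xor_hom_vb_eqv[OF \<Psi> rho_corrected_in_H_words[OF w_lists]] by simp
  then show ?thesis
    using xor_hom_rho_corrected_in_span2[OF \<Psi> n w_lists] by simp
qed

section \<open>The groups \<open>H\<^sub>n\<close> and \<open>VP\<^sub>n\<close>\<close>

definition cls :: "nat \<Rightarrow> word \<Rightarrow> word set" where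
  "cls n w = vb_rel n `` {w}"

lemma mem_cls [simp]: "v \<in> cls n w \<longleftrightarrow> vb_eqv n w v"
  by (simp add: cls_def vb_rel_def)

lemma cls_eq_iff: "u \<in> lists (letters n) \<Longrightarrow> cls n u = cls n v \<longleftrightarrow> vb_eqv n u v"
proof
  assume "u \<in> lists (letters n)" and "cls n u = cls n v"
  then have "vb_eqv n v u"
    using vb_eqv.refl[of u n] by (metis mem_cls)
  then show "vb_eqv n u v" by (rule vb_eqv.sym)
next
  assume uv: "vb_eqv n u v"
  show "cls n u = cls n v"
    using vb_eqv.trans[OF vb_eqv.sym[OF uv]] vb_eqv.trans[OF uv] by (auto simp: set_eq_iff)
qed

lemma carrier_VB: "carrier (VB n) = {cls n w | w. w \<in> lists (letters n)}"
  by (auto simp: VB_def quotient_def cls_def)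

lemma some_in_cls: "w \<in> lists (letters n) \<Longrightarrow> vb_eqv n w (SOME x. x \<in> cls n w)"
  by (metis mem_cls someI_ex vb_eqv.refl)

lemma mult_VB_cls:
  assumes u: "u \<in> lists (letters n)" and v: "v \<in> lists (letters n)"
  shows "cls n u \<otimes>\<^bsub>VB n\<^esub> cls n v = cls n (u @ v)"
proof -
  have "vb_eqv n (u @ v) ((SOME x. x \<in> cls n u) @ (SOME x. x \<in> cls n v))"
    by (rule vb_eqv_append[OF some_in_cls[OF u] some_in_cls[OF v]])
  then have "cls n ((SOME x. x \<in> cls n u) @ (SOME x. x \<in> cls n v)) = cls n (u @ v)"
    using u v by (metis append_in_lists_conv cls_eq_iff vb_eqv.sym)
  then show ?thesis
    unfolding VB_def by (simp add: cls_def[symmetric])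
qed

lemma cls_in_kernel_iff:
  assumes f: "\<And>u v. vb_eqv n u v \<Longrightarrow> f u = f v" and w: "w \<in> lists (letters n)"
  shows "cls n w \<in> {X \<in> carrier (VB n). \<forall>x\<in>X. f x = id} \<longleftrightarrow> f w = id"
proof
  assume "cls n w \<in> {X \<in> carrier (VB n). \<forall>x\<in>X. f x = id}"
  moreover have "w \<in> cls n w"
    using vb_eqv.refl[OF w] by simp
  ultimately show "f w = id" by blast
next
  assume fw: "f w = id"
  have "cls n w \<in> carrier (VB n)"
    unfolding carrier_VB using w by blast
  moreover have "f x = id" if "x \<in> cls n w" for x
    using f[of w x] that fw by simp
  ultimately show "cls n w \<in> {X \<in> carrier (VB n). \<forall>x\<in>X. f x = id}"
    by blast
qed

lemma kernel_elem_cls: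
  assumes "X \<in> {X \<in> carrier (VB n). \<forall>x\<in>X. f x = id}"
  obtains w where "w \<in> lists (letters n)" "X = cls n w" "f w = id"
proof -
  obtain w where w: "w \<in> lists (letters n)" "X = cls n w"
    using assms by (auto simp: carrier_VB)
  moreover have "f w = id"
    using assms vb_eqv.refl[OF w(1)] w(2) by simp
  ultimately show ?thesis using that by blast
qed

lemma H_cls_iff: "w \<in> lists (letters n) \<Longrightarrow> cls n w \<in> H n \<longleftrightarrow> mu_word w = id"
  unfolding H_def using vb_eqv_invariants by (intro cls_in_kernel_iff) auto

lemma VP_cls_iff: "w \<in> lists (letters n) \<Longrightarrow> cls n w \<in> VP n \<longleftrightarrow> nu_word w = id"
  unfolding VP_def using vb_eqv_invariants by (intro cls_in_kernel_iff) auto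

definition class_crossings :: "word set \<Rightarrow> nat \<times> nat \<Rightarrow> bool" where
  "class_crossings X = crossings id (SOME x. x \<in> X)"

lemma class_crossings_cls: "w \<in> lists (letters n) \<Longrightarrow> class_crossings (cls n w) = crossings id w"
  unfolding class_crossings_def using vb_eqv_invariants[OF some_in_cls[of w n]] by simp

lemma hom_H_VP_xor_hom:
  assumes \<phi>: "\<phi> \<in> hom ((VB n)\<lparr>carrier := H n\<rparr>) ((VB n)\<lparr>carrier := VP n\<rparr>)"
  shows "xor_hom n (\<lambda>w. class_crossings (\<phi> (cls n w)))"
  unfolding xor_hom_def
proof (intro conjI ballI allI impI)
  fix u v assume u: "u \<in> H_words n" and v: "v \<in> H_words n"
  have lists: "u \<in> lists (letters n)" "v \<in> lists (letters n)" and H: "cls n u \<in> H n" "cls n v \<in> H n"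
    using u v H_cls_iff by (auto simp: H_words_def)
  have "\<phi> (cls n u) \<in> VP n" "\<phi> (cls n v) \<in> VP n"
    using \<phi> H by (auto simp: hom_def)
  then obtain u' v' where
    u': "u' \<in> lists (letters n)" "\<phi> (cls n u) = cls n u'" "nu_word u' = id" and
    v': "v' \<in> lists (letters n)" "\<phi> (cls n v) = cls n v'" "nu_word v' = id"
    unfolding VP_def by (elim kernel_elem_cls)
  have "\<phi> (cls n (u @ v)) = \<phi> (cls n u) \<otimes>\<^bsub>VB n\<^esub> \<phi> (cls n v)"
    using \<phi> H by (simp add: hom_def mult_VB_cls[OF lists, symmetric])
  also have "\<dots> = cls n (u' @ v')"
    using u' v' mult_VB_cls by simp
  finally show "class_crossings (\<phi> (cls n (u @ v))) =
      (\<lambda>p. class_crossings (\<phi> (cls n u)) p \<noteq> class_crossings (\<phi> (cls n v)) p)"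
    using u' v' class_crossings_cls crossings_pure_append by simp
next
  fix u v assume "u \<in> H_words n" "vb_eqv n u v"
  then have "cls n u = cls n v"
    using cls_eq_iff[of u n v] by (simp add: H_words_def)
  then show "class_crossings (\<phi> (cls n u)) = class_crossings (\<phi> (cls n v))"
    by simp
qed

lemma iso_H_VP_crossings_span2:
  assumes \<phi>: "\<phi> \<in> iso ((VB n)\<lparr>carrier := H n\<rparr>) ((VB n)\<lparr>carrier := VP n\<rparr>)" and n: "3 \<le> n"
  shows "\<exists>V1 V2. \<forall>e \<in> lists (letters n). nu_word e = id \<longrightarrow> in_span2 V1 V2 (crossings id e)"
proof (intro exI ballI impI)
  define \<Psi> where "\<Psi> w = class_crossings (\<phi> (cls n w))" for w
  have \<Psi>: "xor_hom n \<Psi>"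
    unfolding \<Psi>_def using \<phi> by (intro hom_H_VP_xor_hom) (simp add: iso_def)
  fix e assume e: "e \<in> lists (letters n)" "nu_word e = id"
  have "cls n e \<in> \<phi> ` H n"
    using \<phi> VP_cls_iff[OF e(1)] e(2) by (simp add: iso_def bij_betw_def)
  then obtain w where w: "w \<in> H_words n" "\<phi> (cls n w) = cls n e"
    unfolding H_def by (auto elim!: kernel_elem_cls simp: H_words_def)
  then have "\<Psi> w = crossings id e"
    using class_crossings_cls[OF e(1)] by (simp add: \<Psi>_def)
  then show "in_span2 (\<Psi> [s 1]) (\<Psi> twisted_sigma1) (crossings id e)"
    using xor_hom_H_words_in_span2[OF \<Psi> n w(1)] by simp
qed

lemma five_crossing_values:
  assumes "3 \<le> n"
  obtains E where "\<forall>e\<in>E. e \<in> lists (letters n) \<and> nu_word e = id" "card (crossings id ` E) = 5"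
proof
  \<comment> \<open>their crossing functions are \<open>0\<close> and the indicators of \<open>(1,2), (2,1), (1,3), (3,1)\<close>\<close>
  let ?E = "{[], [s 1, r 1], [r 1, s 1], [r 2, s 1, r 1, r 2], [r 2, r 1, s 1, r 1, r 1, r 2]}"
  show "\<forall>e\<in>?E. e \<in> lists (letters n) \<and> nu_word e = id"
    using assms by (auto simp: comp_assoc[symmetric])
  have point_eq_iff: "(\<lambda>p. p = a) = (\<lambda>p. p = b) \<longleftrightarrow> a = b" for a b :: "nat \<times> nat"
    by metis
  show "card (crossings id ` ?E) = 5"
    by (simp add: adj_def point_eq_iff fun_eq_iff)
qed

theorem proposition7p1:
  fixes n :: nat
  assumes "n \<ge> 3"
  shows "\<not> ((VB n)\<lparr>carrier := H n\<rparr> \<cong> (VB n)\<lparr>carrier := VP n\<rparr>)"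
proof
  assume "(VB n)\<lparr>carrier := H n\<rparr> \<cong> (VB n)\<lparr>carrier := VP n\<rparr>"
  then obtain V1 V2 where span:
    "\<And>e. e \<in> lists (letters n) \<Longrightarrow> nu_word e = id \<Longrightarrow> in_span2 V1 V2 (crossings id e)"
    using iso_H_VP_crossings_span2 assms unfolding is_iso_def by blast
  obtain E where E: "\<forall>e\<in>E. e \<in> lists (letters n) \<and> nu_word e = id" "card (crossings id ` E) = 5"
    using five_crossing_values assms by blast
  have "crossings id ` E \<subseteq> Collect (in_span2 V1 V2)"
    using span E(1) by blast
  then have "card (crossings id ` E) \<le> 4"
    by (rule card_le_4_if_in_span2)
  with E(2) show False by simp
qed

end
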